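(* For allocating $m$ indivisible chores to $n$ agents with additive disvaluation functions and equal responsibilities, there is an allocation mechanism such that: (1) it is ex-ante EF-RA; (2) every agent $i$ that follows the greedy picking strategy receives a bundle of expected disvalue at most her proportional share $\frac1n c_i(\mathcal M)$; and (3) every agent $i$ that follows the greedy picking strategy receives ex-post a bundle of disvalue at most $\frac85\,CS_i$.
   Context: Agents have additive disvaluations $c_i\ge0$ over the chore set $\mathcal M$, all with responsibility $1/n$. Mechanisms are (possibly randomized) multi-round procedures, e.g. a preliminary phase assigning the $n$ labels of a picking sequence $\pi\in[n]^m$ to the agents, followed by rounds in which the holder of label $\pi_r$ takes one remaining chore. Greedy picking strategy: take a remaining chore of smallest own disvalue. A risk averse agent evaluates a role by the smallest expected disvalue she can guarantee with her best strategy against worst-case behaviour of all other agents. EF-RA: no risk averse agent would, before the mechanism runs, strictly prefer (under this evaluation) to be in the role of another agent of equal or higher responsibility. $CS_i=\max\{\frac1nc_i(\mathcal M),d_1,d_n+d_{n+1}\}$, $d_1\ge d_2\ge\cdots$ the disvalues under $c_i$ sorted non-increasingly, padded with zeros. *)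

theory Defs
  imports "HOL-Probability.Probability"
begin

text \<open>Agents are 0..<n, chores are 0..<m (natural numbers). A disvaluation profile is
  c :: nat => nat => real, c i j = disvalue of chore j for agent i.
  A (randomized picking) mechanism is a probability distribution D over agent sequences
  tau (lists of length m with entries < n): in round r agent tau!r takes one remaining chore.
  The realised sequence is revealed at the start, so strategies may depend on it.
  (A random assignment of the labels of a picking sequence pi to the agents is the special
  case where tau = map (inverse label assignment) pi.)\<close>

definition remaining :: "nat \<Rightarrow> nat list \<Rightarrow> nat set" where
  "remaining m h = {0..<m} - set h"

text \<open>A strategy maps (agent sequence, history of chores taken so far) to a chore.\<close>
type_synonym strategy = "nat list \<Rightarrow> nat list \<Rightarrow> nat"

text \<open>Run of the picking rounds under a strategy profile P. An illegal choice is replaced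
  by the remaining chore of smallest index (this does not change the set of achievable plays).\<close>
fun run :: "(nat \<Rightarrow> strategy) \<Rightarrow> nat list \<Rightarrow> nat \<Rightarrow> nat \<Rightarrow> nat list" where
  "run P tau m 0 = []"
| "run P tau m (Suc r) =
     (let h = run P tau m r; x = P (tau ! r) tau h
      in h @ [if x \<in> remaining m h then x else Min (remaining m h)])"

definition disvalue :: "(nat \<Rightarrow> real) \<Rightarrow> nat \<Rightarrow> nat list \<Rightarrow> (nat \<Rightarrow> strategy) \<Rightarrow> nat \<Rightarrow> real" where
  "disvalue ci m tau P i =
     (let h = run P tau m m in \<Sum>r<m. if tau ! r = i then ci (h ! r) else 0)"

definition valid_mechanism :: "nat \<Rightarrow> nat \<Rightarrow> nat list pmf \<Rightarrow> bool" where
  "valid_mechanism n m D \<longleftrightarrow> finite (set_pmf D) \<and>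
     (\<forall>tau\<in>set_pmf D. length tau = m \<and> set tau \<subseteq> {..<n})"

definition ra_value :: "(nat \<Rightarrow> real) \<Rightarrow> nat \<Rightarrow> nat list pmf \<Rightarrow> nat \<Rightarrow> real" where
  "ra_value ci m D j =
     (INF s::strategy. SUP Q::nat \<Rightarrow> strategy.
        measure_pmf.expectation D (\<lambda>tau. disvalue ci m tau (Q(j := s)) j))"

text \<open>EF-RA (all responsibilities equal to 1/n, so every role j is of equal responsibility).\<close>
definition EF_RA :: "nat \<Rightarrow> nat \<Rightarrow> nat list pmf \<Rightarrow> (nat \<Rightarrow> nat \<Rightarrow> real) \<Rightarrow> bool" where
  "EF_RA n m D c \<longleftrightarrow>
     (\<forall>i<n. \<forall>j<n. \<not> (ra_value (c i) m D j < ra_value (c i) m D i))"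

definition greedy :: "(nat \<Rightarrow> real) \<Rightarrow> nat \<Rightarrow> strategy \<Rightarrow> bool" where
  "greedy ci m s \<longleftrightarrow> (\<forall>tau h. remaining m h \<noteq> {} \<longrightarrow>
      s tau h \<in> remaining m h \<and> (\<forall>y\<in>remaining m h. ci (s tau h) \<le> ci y))"

text \<open>d_(k+1): the k-th (0-based) largest disvalue, padded with zeros.\<close>
definition dsorted :: "(nat \<Rightarrow> real) \<Rightarrow> nat \<Rightarrow> nat \<Rightarrow> real" where
  "dsorted ci m k = (let L = rev (sort (map ci [0..<m])) in if k < length L then L ! k else 0)"

definition CS :: "(nat \<Rightarrow> real) \<Rightarrow> nat \<Rightarrow> nat \<Rightarrow> real" where
  "CS ci n m = max ((\<Sum>j<m. ci j) / real n)
                   (max (dsorted ci m 0) (dsorted ci m (n - 1) + dsorted ci m n))"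

end

theory Submission
  imports Defs
begin

(* A greedy agent who picks when x + 1 chores remain receives a chore of disvalue at most
   d_(x+1).  The mechanism runs one fixed picking sequence under a uniformly random cyclic
   relabelling of the agents.  Relabelling permutes the roles without changing the distribution,
   so all roles have the same risk averse value (EF-RA); and every position of the sequence
   goes to a given agent under exactly one relabelling, so the expected disvalue of a greedy
   agent is at most (1/n) (d_1 + ... + d_m) = c_i(M)/n.
   For the ex-post bound the sequence is read backwards: agents 1, ..., n hold the last n
   positions, and the earlier positions follow a pattern of period 5n in which every agent
   holds at most  alpha K/n + beta [K >= 1] + gamma ([K >= n] + [K >= n + 1])  of the last K
   positions, for coefficients of the agent with alpha + beta + gamma = 8/5.  Summation by parts
   against the non-increasing d turns this count into
   alpha c_i(M)/n + beta d_1 + gamma (d_n + d_(n+1)) <= 8/5 CS_i. *)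

section \<open>Greedy picks\<close>

lemma length_run [simp]: "length (run P tau m r) = r"
  by (induction r) (simp_all add: Let_def)

lemma nth_run: "r < r' \<Longrightarrow> run P tau m r' ! r = run P tau m (Suc r) ! r"
proof (induction r')
  case (Suc r')
  show ?case
  proof (cases "r < r'")
    case True
    then show ?thesis using Suc by (simp add: Let_def nth_append)
  next
    case False
    with Suc.prems have "r = r'" by simp
    then show ?thesis by simp
  qed
qed simp

lemma card_remaining:
  assumes "distinct h" "set h \<subseteq> {..<m}"
  shows "card (remaining m h) = m - length h"
  using assms distinct_card[OF assms(1)] unfolding remaining_def
  by (simp add: card_Diff_subset subset_eq)

lemma run_distinct_subset:
  "r \<le> m \<Longrightarrow> distinct (run P tau m r) \<and> set (run P tau m r) \<subseteq> {..<m}"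
proof (induction r)
  case (Suc r)
  let ?h = "run P tau m r"
  have h: "distinct ?h" "set ?h \<subseteq> {..<m}" using Suc by auto
  then have "remaining m ?h \<noteq> {}" using card_remaining[OF h] Suc.prems by auto
  then have "Min (remaining m ?h) \<in> remaining m ?h" by (intro Min_in) (simp_all add: remaining_def)
  then show ?case using h by (auto simp: Let_def remaining_def)
qed simp

lemma remaining_run_nonempty: "r < m \<Longrightarrow> remaining m (run P tau m r) \<noteq> {}"
  using card_remaining[of "run P tau m r" m] run_distinct_subset[of r m P tau] by auto

definition sorted_disvalues :: "(nat \<Rightarrow> real) \<Rightarrow> nat \<Rightarrow> real list" where
  "sorted_disvalues ci m = rev (sort (map ci [0..<m]))"

lemma dsorted_eq_nth: "dsorted ci m k = (if k < m then sorted_disvalues ci m ! k else 0)"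
  by (simp add: dsorted_def sorted_disvalues_def)

lemma length_sorted_disvalues [simp]: "length (sorted_disvalues ci m) = m"
  by (simp add: sorted_disvalues_def)

lemma sorted_disvalues_antimono:
  assumes "i \<le> j" "j < m"
  shows "sorted_disvalues ci m ! j \<le> sorted_disvalues ci m ! i"
proof -
  have "sorted_wrt (\<ge>) (sorted_disvalues ci m)" by (simp add: sorted_disvalues_def sorted_wrt_rev)
  from sorted_wrt_nth_less[OF this, of i j] show ?thesis using assms by (cases "i = j") auto
qed

lemma mset_sorted_disvalues: "mset (sorted_disvalues ci m) = mset (map ci [0..<m])"
  by (simp add: sorted_disvalues_def)

lemma dsorted_ge_if_card_ge:
  assumes "R \<subseteq> {..<m}" "card R = Suc k" "\<forall>y\<in>R. v \<le> ci y"
  shows "v \<le> dsorted ci m k"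
proof (rule ccontr)
  let ?L = "sorted_disvalues ci m"
  assume "\<not> v \<le> dsorted ci m k"
  have "Suc k \<le> m" using card_mono[OF finite_lessThan assms(1)] assms(2) by simp
  then have lt: "?L ! k < v" using \<open>\<not> v \<le> dsorted ci m k\<close> by (simp add: dsorted_eq_nth)
  have "Suc k \<le> card {y. y < m \<and> v \<le> ci y}"
    unfolding assms(2)[symmetric] using assms(1,3) by (intro card_mono) auto
  also have "\<dots> = length (filter (\<lambda>z. v \<le> z) (map ci [0..<m]))"
    by (simp add: length_filter_conv_card, rule arg_cong[where f = card], auto)
  also have "\<dots> = length (filter (\<lambda>z. v \<le> z) ?L)"
    by (metis mset_sorted_disvalues mset_filter size_mset)
  also have "\<dots> = card {i. i < m \<and> v \<le> ?L ! i}" by (simp add: length_filter_conv_card)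
  also have "\<dots> \<le> card {..<k}"
  proof (intro card_mono subsetI)
    fix x assume "x \<in> {i. i < m \<and> v \<le> ?L ! i}"
    then have x: "x < m" "v \<le> ?L ! x" by auto
    show "x \<in> {..<k}"
    proof (rule ccontr)
      assume "x \<notin> {..<k}"
      then have "?L ! x \<le> ?L ! k" using x sorted_disvalues_antimono[of k x m ci] by simp
      then show False using lt x by simp
    qed
  qed simp
  finally show False by simp
qed

lemma dsorted_nonneg:
  assumes "\<forall>j<m. 0 \<le> ci j"
  shows "0 \<le> dsorted ci m k"
proof (cases "k < m")
  case True
  then have "sorted_disvalues ci m ! k \<in> set (sorted_disvalues ci m)" by simp
  then show ?thesis using True assms by (auto simp: dsorted_eq_nth sorted_disvalues_def)
qed (simp add: dsorted_eq_nth)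

lemma dsorted_Suc_le:
  assumes "\<forall>j<m. 0 \<le> ci j"
  shows "dsorted ci m (Suc k) \<le> dsorted ci m k"
proof (cases "Suc k < m")
  case True
  then show ?thesis using sorted_disvalues_antimono[of k "Suc k" m ci] by (simp add: dsorted_eq_nth)
next
  case False
  then show ?thesis using dsorted_nonneg[OF assms, of k] by (simp add: dsorted_eq_nth)
qed

lemma sum_dsorted: "(\<Sum>k<m. dsorted ci m k) = (\<Sum>j<m. ci j)"
proof -
  have "(\<Sum>k<m. dsorted ci m k) = sum_list (sorted_disvalues ci m)"
    by (simp add: dsorted_eq_nth sum_list_sum_nth lessThan_atLeast0)
  also have "\<dots> = sum_list (map ci [0..<m])" by (metis mset_sorted_disvalues sum_mset_sum_list)
  finally show ?thesis by (simp add: sum_list_sum_nth lessThan_atLeast0)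
qed

lemma greedy_pick_le_dsorted:
  assumes "greedy ci m s" "r < m" "P (tau ! r) = s"
  shows "ci (run P tau m (Suc r) ! r) \<le> dsorted ci m (m - Suc r)"
proof -
  let ?h = "run P tau m r"
  have card: "card (remaining m ?h) = Suc (m - Suc r)"
    using card_remaining[of ?h m] run_distinct_subset[of r m P tau] assms(2) by simp
  have pick: "s tau ?h \<in> remaining m ?h" "\<forall>y\<in>remaining m ?h. ci (s tau ?h) \<le> ci y"
    using assms(1) remaining_run_nonempty[OF assms(2)] unfolding greedy_def by auto
  then have "run P tau m (Suc r) ! r = s tau ?h"
    using assms(3) by (simp add: Let_def nth_append)
  moreover have "ci (s tau ?h) \<le> dsorted ci m (m - Suc r)"
    using pick card by (intro dsorted_ge_if_card_ge) (auto simp: remaining_def)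
  ultimately show ?thesis by simp
qed

lemma disvalue_greedy_le:
  assumes "greedy ci m s"
  shows "disvalue ci m tau (Q(i := s)) i \<le> (\<Sum>r<m. if tau ! r = i then dsorted ci m (m - Suc r) else 0)"
  unfolding disvalue_def Let_def
proof (rule sum_mono)
  fix r assume "r \<in> {..<m}"
  then show "(if tau ! r = i then ci (run (Q(i := s)) tau m m ! r) else 0)
      \<le> (if tau ! r = i then dsorted ci m (m - Suc r) else 0)"
    using greedy_pick_le_dsorted[OF assms, of r "Q(i := s)" tau] nth_run[of r m] by auto
qed

section \<open>Summation by parts\<close>

lemma sum_mult_by_parts:
  fixes f d :: "nat \<Rightarrow> 'a::comm_ring"
  shows "(\<Sum>x<N. f x * d x) = (\<Sum>x<N. (\<Sum>y\<le>x. f y) * (d x - d (Suc x))) + (\<Sum>y<N. f y) * d N"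
  by (induction N) (simp_all add: algebra_simps lessThan_Suc_atMost[symmetric])

lemma sum_antimono_le_weighted_sum:
  fixes d w :: "nat \<Rightarrow> real"
  assumes antimono: "\<And>x. d (Suc x) \<le> d x" and nonneg: "\<And>x. 0 \<le> d x"
    and count: "\<And>K. K \<le> N \<Longrightarrow> real (card {x. x < K \<and> P x}) \<le> (\<Sum>x<K. w x)"
  shows "(\<Sum>x<N. if P x then d x else 0) \<le> (\<Sum>x<N. w x * d x)"
proof -
  define u :: "nat \<Rightarrow> real" where "u x = (if P x then 1 else 0)" for x
  have count_u: "(\<Sum>y<K. u y) \<le> (\<Sum>y<K. w y)" if "K \<le> N" for K
  proof -
    have "(\<Sum>y<K. u y) = real (card {x. x < K \<and> P x})"
      unfolding u_def by (simp add: sum.If_cases Int_def conj_commute)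
    then show ?thesis using count[OF that] by simp
  qed
  have "(\<Sum>x<N. if P x then d x else 0) = (\<Sum>x<N. u x * d x)"
    unfolding u_def by (auto intro: sum.cong)
  also have "\<dots> = (\<Sum>x<N. (\<Sum>y\<le>x. u y) * (d x - d (Suc x))) + (\<Sum>y<N. u y) * d N"
    by (rule sum_mult_by_parts)
  also have "\<dots> \<le> (\<Sum>x<N. (\<Sum>y\<le>x. w y) * (d x - d (Suc x))) + (\<Sum>y<N. w y) * d N"
  proof (intro add_mono[OF sum_mono mult_right_mono])
    fix x assume "x \<in> {..<N}"
    then show "(\<Sum>y\<le>x. u y) * (d x - d (Suc x)) \<le> (\<Sum>y\<le>x. w y) * (d x - d (Suc x))"
      using count_u[of "Suc x"] antimono[of x]
      by (intro mult_right_mono) (simp_all add: lessThan_Suc_atMost[symmetric])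
  qed (use count_u[of N] nonneg[of N] in auto)
  also have "\<dots> = (\<Sum>x<N. w x * d x)" by (rule sum_mult_by_parts[symmetric])
  finally show ?thesis .
qed

lemma sum_if_eq_le: "finite A \<Longrightarrow> 0 \<le> f a \<Longrightarrow> (\<Sum>x\<in>A. if x = a then f x else 0) \<le> f a"
  for f :: "'a \<Rightarrow> real"
  by (simp add: sum.delta)

section \<open>Relabelling the agents\<close>

(* Agent l plays in tau as agent sigma l plays under Q in map sigma tau, so that both runs
   take the same chores. *)
definition relabel_profile :: "(nat \<Rightarrow> nat) \<Rightarrow> (nat \<Rightarrow> strategy) \<Rightarrow> nat \<Rightarrow> strategy" where
  "relabel_profile \<sigma> Q = (\<lambda>l tau h. Q (\<sigma> l) (map \<sigma> tau) h)"

definition relabel_strategy :: "(nat \<Rightarrow> nat) \<Rightarrow> strategy \<Rightarrow> strategy" where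
  "relabel_strategy \<sigma> s = (\<lambda>tau h. s (map \<sigma> tau) h)"

lemma run_relabel: "r \<le> length tau \<Longrightarrow> run Q (map \<sigma> tau) m r = run (relabel_profile \<sigma> Q) tau m r"
  by (induction r) (simp_all add: Let_def relabel_profile_def)

lemma disvalue_relabel:
  assumes "length tau = m" "inj \<sigma>"
  shows "disvalue ci m (map \<sigma> tau) Q (\<sigma> j) = disvalue ci m tau (relabel_profile \<sigma> Q) j"
  using assms by (simp add: disvalue_def run_relabel inj_eq)

lemma relabel_profile_upd:
  "inj \<sigma> \<Longrightarrow>
    relabel_profile \<sigma> (Q(\<sigma> j := s)) = (relabel_profile \<sigma> Q)(j := relabel_strategy \<sigma> s)"
  unfolding relabel_profile_def relabel_strategy_def by (rule ext) (auto simp: inj_eq)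

lemma surj_relabel_profile: "inj \<sigma> \<Longrightarrow> surj (relabel_profile \<sigma>)"
  by (rule surjI[of _ "relabel_profile (inv \<sigma>)"]) (simp add: relabel_profile_def map_idI)

lemma surj_relabel_strategy: "inj \<sigma> \<Longrightarrow> surj (relabel_strategy \<sigma>)"
  by (rule surjI[of _ "relabel_strategy (inv \<sigma>)"]) (simp add: relabel_strategy_def map_idI)

lemma range_comp_surj: "surj f \<Longrightarrow> range (\<lambda>x. g (f x)) = range g"
  by (metis image_image)

lemma ra_value_relabel:
  assumes "inj \<sigma>" "map_pmf (map \<sigma>) D = D" "\<forall>tau\<in>set_pmf D. length tau = m"
  shows "ra_value ci m D (\<sigma> j) = ra_value ci m D j"
proof -
  let ?E = "\<lambda>s Q. measure_pmf.expectation D (\<lambda>tau. disvalue ci m tau (Q(j := s)) j)"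
  have "measure_pmf.expectation D (\<lambda>tau. disvalue ci m tau (Q(\<sigma> j := s)) (\<sigma> j))
      = ?E (relabel_strategy \<sigma> s) (relabel_profile \<sigma> Q)" for s Q
  proof -
    have "measure_pmf.expectation D (\<lambda>tau. disvalue ci m tau (Q(\<sigma> j := s)) (\<sigma> j))
        = measure_pmf.expectation D (\<lambda>tau. disvalue ci m (map \<sigma> tau) (Q(\<sigma> j := s)) (\<sigma> j))"
      by (subst (1) assms(2)[symmetric]) simp
    also have "\<dots> = ?E (relabel_strategy \<sigma> s) (relabel_profile \<sigma> Q)"
      using assms(1,3) by (intro integral_cong_AE) (simp_all add: AE_measure_pmf_iff disvalue_relabel relabel_profile_upd)
    finally show ?thesis .
  qed
  then have "ra_value ci m D (\<sigma> j) = (INF s. SUP Q. ?E (relabel_strategy \<sigma> s) (relabel_profile \<sigma> Q))"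
    by (simp add: ra_value_def)
  also have "\<dots> = (INF s. SUP Q. ?E (relabel_strategy \<sigma> s) Q)"
    using range_comp_surj[OF surj_relabel_profile[OF assms(1)], of "?E _"] by simp
  also have "\<dots> = ra_value ci m D j"
    using range_comp_surj[OF surj_relabel_strategy[OF assms(1)], of "\<lambda>s. SUP Q. ?E s Q"]
    by (simp add: ra_value_def)
  finally show ?thesis .
qed

lemma EF_RA_if_relabelling_transitive:
  assumes "\<forall>i<n. \<forall>j<n. \<exists>\<sigma>. inj \<sigma> \<and> \<sigma> i = j \<and> map_pmf (map \<sigma>) D = D"
    and "\<forall>tau\<in>set_pmf D. length tau = m"
  shows "EF_RA n m D c"
  unfolding EF_RA_def using assms ra_value_relabel by (metis order.irrefl)

section \<open>Rotation mechanisms\<close>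

lemma add_mod_eq_iff:
  fixes a k i n :: nat
  assumes "a < n" "k < n" "i < n"
  shows "(a + k) mod n = i \<longleftrightarrow> a = (i + (n - k)) mod n"
proof
  assume "(a + k) mod n = i"
  then have "(i + (n - k)) mod n = ((a + k) mod n + (n - k)) mod n" by simp
  also have "\<dots> = (a + k + (n - k)) mod n" by (rule mod_add_left_eq)
  also have "a + k + (n - k) = a + n" using assms by simp
  finally show "a = (i + (n - k)) mod n" using assms by simp
next
  assume "a = (i + (n - k)) mod n"
  then have "(a + k) mod n = ((i + (n - k)) mod n + k) mod n" by simp
  also have "\<dots> = (i + (n - k) + k) mod n" by (rule mod_add_left_eq)
  also have "i + (n - k) + k = i + n" using assms by simp
  finally show "(a + k) mod n = i" using assms by simp
qed

lemma bij_betw_add_mod: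
  fixes s n :: nat
  assumes "s < n"
  shows "bij_betw (\<lambda>k. (k + s) mod n) {..<n} {..<n}"
proof -
  have "inj_on (\<lambda>k. (k + s) mod n) {..<n}"
  proof (rule inj_onI)
    fix x y assume xy: "x \<in> {..<n}" "y \<in> {..<n}" and eq: "(x + s) mod n = (y + s) mod n"
    let ?z = "((y + s) mod n + (n - s)) mod n"
    have "x = ?z" by (rule add_mod_eq_iff[THEN iffD1]) (use xy eq assms in auto)
    moreover have "y = ?z" by (rule add_mod_eq_iff[THEN iffD1]) (use xy assms in auto)
    ultimately show "x = y" by (rule trans[OF _ sym])
  qed
  moreover have "(\<lambda>k. (k + s) mod n) ` {..<n} \<subseteq> {..<n}" using assms by auto
  ultimately show ?thesis by (simp add: bij_betw_def endo_inj_surj)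
qed

lemma sum_if_add_mod_eq:
  fixes a i n :: nat
  assumes "a < n" "i < n"
  shows "(\<Sum>k<n. if (a + k) mod n = i then c else 0) = c"
proof -
  have "(\<Sum>k<n. if (a + k) mod n = i then c else 0) = (\<Sum>k<n. if k = (i + (n - a)) mod n then c else 0)"
    using add_mod_eq_iff[of _ n a i] assms by (intro sum.cong) (simp_all add: add.commute)
  also have "\<dots> = c" using assms by (simp add: sum.delta')
  finally show ?thesis .
qed

definition rotate_agents :: "nat \<Rightarrow> nat \<Rightarrow> nat \<Rightarrow> nat" where
  "rotate_agents n s x = (if x < n then (x + s) mod n else x)"

lemma inj_rotate_agents:
  assumes "s < n"
  shows "inj (rotate_agents n s)"
proof (rule injI)
  fix x y assume eq: "rotate_agents n s x = rotate_agents n s y"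
  have below: "rotate_agents n s z < n \<longleftrightarrow> z < n" for z
    using assms by (simp add: rotate_agents_def)
  show "x = y"
  proof (cases "x < n")
    case True
    then have "y < n" using below[of x] below[of y] eq by simp
    with True eq have "(x + s) mod n = (y + s) mod n" by (simp add: rotate_agents_def)
    with True \<open>y < n\<close> show ?thesis
      using inj_onD[OF bij_betw_imp_inj_on[OF bij_betw_add_mod[OF assms]], of x y] by simp
  next
    case False
    then have "\<not> y < n" using below[of x] below[of y] eq by simp
    with False eq show ?thesis by (simp add: rotate_agents_def)
  qed
qed

(* own x is the agent (before relabelling) of the pick made when x + 1 chores remain:
   the sequence is described from its end. *)
definition rotated_sequence :: "nat \<Rightarrow> nat \<Rightarrow> (nat \<Rightarrow> nat) \<Rightarrow> nat \<Rightarrow> nat list" where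
  "rotated_sequence n m own k = map (\<lambda>r. (own (m - Suc r) + k) mod n) [0..<m]"

definition rotation_mechanism :: "nat \<Rightarrow> nat \<Rightarrow> (nat \<Rightarrow> nat) \<Rightarrow> nat list pmf" where
  "rotation_mechanism n m own = map_pmf (rotated_sequence n m own) (pmf_of_set {..<n})"

lemma set_pmf_rotation_mechanism:
  "0 < n \<Longrightarrow> set_pmf (rotation_mechanism n m own) = rotated_sequence n m own ` {..<n}"
  by (simp add: rotation_mechanism_def set_pmf_of_set lessThan_empty_iff)

lemma valid_rotation_mechanism: "0 < n \<Longrightarrow> valid_mechanism n m (rotation_mechanism n m own)"
  by (auto simp: valid_mechanism_def set_pmf_rotation_mechanism rotated_sequence_def)

lemma expectation_rotation_mechanism:
  "0 < n \<Longrightarrow> measure_pmf.expectation (rotation_mechanism n m own) f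
     = (\<Sum>k<n. f (rotated_sequence n m own k)) / n"
  by (simp add: rotation_mechanism_def integral_pmf_of_set lessThan_empty_iff)

lemma map_rotate_rotated_sequence:
  assumes "0 < n"
  shows "map (rotate_agents n s) (rotated_sequence n m own k) = rotated_sequence n m own ((k + s) mod n)"
proof -
  have "((a + k) mod n + s) mod n = (a + (k + s) mod n) mod n" for a
    by (metis mod_add_left_eq mod_add_right_eq add.assoc)
  then show ?thesis using assms by (simp add: rotated_sequence_def rotate_agents_def)
qed

lemma rotation_mechanism_rotate_invariant:
  assumes "s < n"
  shows "map_pmf (map (rotate_agents n s)) (rotation_mechanism n m own) = rotation_mechanism n m own"
proof -
  have bij: "bij_betw (\<lambda>k. (k + s) mod n) {..<n} {..<n}" using bij_betw_add_mod[OF assms] .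
  have "map_pmf (map (rotate_agents n s)) (rotation_mechanism n m own)
      = map_pmf (rotated_sequence n m own) (map_pmf (\<lambda>k. (k + s) mod n) (pmf_of_set {..<n}))"
    using assms by (simp add: rotation_mechanism_def map_pmf_comp map_rotate_rotated_sequence)
  also have "map_pmf (\<lambda>k. (k + s) mod n) (pmf_of_set {..<n}) = pmf_of_set {..<n}"
    using assms bij_betw_imp_inj_on[OF bij] bij_betw_imp_surj_on[OF bij]
    by (subst map_pmf_of_set_inj) auto
  finally show ?thesis by (simp add: rotation_mechanism_def)
qed

lemma EF_RA_rotation_mechanism:
  assumes "0 < n"
  shows "EF_RA n m (rotation_mechanism n m own) c"
proof (rule EF_RA_if_relabelling_transitive, intro allI impI)
  fix i j assume "i < n" "j < n"
  define s where "s = (j + (n - i)) mod n"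
  have "(i + s) mod n = (i + (j + (n - i))) mod n" unfolding s_def by (rule mod_add_right_eq)
  also have "i + (j + (n - i)) = j + n" using \<open>i < n\<close> by simp
  finally have "rotate_agents n s i = j" using \<open>i < n\<close> \<open>j < n\<close> by (simp add: rotate_agents_def)
  moreover have "s < n" using assms by (simp add: s_def)
  ultimately show "\<exists>\<sigma>. inj \<sigma> \<and> \<sigma> i = j \<and>
      map_pmf (map \<sigma>) (rotation_mechanism n m own) = rotation_mechanism n m own"
    using inj_rotate_agents rotation_mechanism_rotate_invariant by blast
qed (use assms in \<open>simp add: set_pmf_rotation_mechanism rotated_sequence_def\<close>)

lemma greedy_disvalue_rotated_sequence_le:
  assumes "greedy ci m s"
  shows "disvalue ci m (rotated_sequence n m own k) (Q(i := s)) i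
    \<le> (\<Sum>x<m. if (own x + k) mod n = i then dsorted ci m x else 0)"
proof -
  let ?g = "\<lambda>x. if (own x + k) mod n = i then dsorted ci m x else 0"
  have "disvalue ci m (rotated_sequence n m own k) (Q(i := s)) i
      \<le> (\<Sum>r<m. if rotated_sequence n m own k ! r = i then dsorted ci m (m - Suc r) else 0)"
    by (rule disvalue_greedy_le[OF assms])
  also have "\<dots> = (\<Sum>r<m. ?g (m - Suc r))"
    by (intro sum.cong) (simp_all add: rotated_sequence_def)
  also have "\<dots> = (\<Sum>x<m. ?g x)" by (rule sum.nat_diff_reindex)
  finally show ?thesis .
qed

lemma expected_greedy_disvalue_le_share:
  assumes "0 < n" "i < n" "\<And>x. own x < n" "greedy ci m s"
  shows "measure_pmf.expectation (rotation_mechanism n m own) (\<lambda>tau. disvalue ci m tau (Q(i := s)) i)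
    \<le> (\<Sum>j<m. ci j) / n"
proof -
  have "(\<Sum>k<n. disvalue ci m (rotated_sequence n m own k) (Q(i := s)) i)
      \<le> (\<Sum>k<n. \<Sum>x<m. if (own x + k) mod n = i then dsorted ci m x else 0)"
    by (intro sum_mono greedy_disvalue_rotated_sequence_le[OF assms(4)])
  also have "\<dots> = (\<Sum>x<m. dsorted ci m x)"
    using assms(2,3) by (subst sum.swap) (simp add: sum_if_add_mod_eq)
  also have "\<dots> = (\<Sum>j<m. ci j)" by (rule sum_dsorted)
  finally show ?thesis using assms(1) by (simp add: expectation_rotation_mechanism divide_right_mono)
qed

section \<open>The picking sequence\<close>

(* Agents and slots are 1-based in these tables.  The agents fall into five groups cut at
   n/4, 2n/5, n - 2n/5 and n - (2n/5 - n/4); within a period of five blocks of n positions an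
   agent of these groups holds 3, 4, 5, 7 and 6 positions respectively.  In a block of pattern v,
   slot q is held by agent  block_owner n v q,  and agent j holds the slots  block_slots n j v. *)
definition quarter :: "int \<Rightarrow> int" where "quarter n = n div 4"

definition two_fifths :: "int \<Rightarrow> int" where "two_fifths n = 2 * n div 5"

lemma quarter_two_fifths_bounds:
  "4 * quarter n \<le> n" "n < 4 * quarter n + 4" "5 * two_fifths n \<le> 2 * n" "2 * n < 5 * two_fifths n + 5"
  unfolding quarter_def two_fifths_def by linarith+

lemma agent_region_cases:
  obtains "j \<le> quarter n"
  | "\<not> j \<le> quarter n" "j \<le> two_fifths n"
  | "\<not> j \<le> quarter n" "\<not> j \<le> two_fifths n" "j \<le> n - two_fifths n"
  | "\<not> j \<le> quarter n" "\<not> j \<le> two_fifths n" "\<not> j \<le> n - two_fifths n"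
      "j \<le> n - (two_fifths n - quarter n)"
  | "\<not> j \<le> quarter n" "\<not> j \<le> two_fifths n" "\<not> j \<le> n - two_fifths n"
      "\<not> j \<le> n - (two_fifths n - quarter n)"
  by argo

definition block_owner :: "int \<Rightarrow> nat \<Rightarrow> int \<Rightarrow> int" where
"block_owner n v q = (let l1 = quarter n; l2 = two_fifths n; h2 = l2 - l1 in
  if v = 0 then (if q \<le> n - l2 then n + 1 - q else if q \<le> n - h2 then n - h2 + 1 - q else q)
  else if v = 1 then (if q \<le> h2 then l1 + q else if q \<le> l2 then (n - l2 - h2) + q
     else if q \<le> n - l2 then n + 1 - q else if q \<le> n - h2 then 2*n - l2 - h2 + 1 - q else q)
  else if v = 2 then (if q \<le> h2 then l1 + q else if q \<le> l2 then l2 + 1 - q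
     else if q \<le> n - l2 then n + 1 - q else if q \<le> n - h2 then 2*n - l2 - h2 + 1 - q else q)
  else if v = 3 then (if q \<le> h2 then l1 + q else if q \<le> n - l2 then n + 1 - q
     else if q \<le> n - l1 then q + l1 else 2*n - l2 + 1 - q)
  else (if q \<le> l1 then q else if q \<le> l2 then l1 + l2 + 1 - q
     else if q \<le> n - l2 then n + 1 - q else if q \<le> n - l1 then q + l1 else 2*n - l2 + 1 - q))"

definition block_slots :: "int \<Rightarrow> int \<Rightarrow> nat \<Rightarrow> int list" where
"block_slots n j v = (let l1 = quarter n; l2 = two_fifths n; h2 = l2 - l1 in
  if j \<le> l1 then (if v = 0 then [n - h2 + 1 - j] else if v = 2 then [l2 + 1 - j] else if v = 4 then [j] else [])
  else if j \<le> l2 then (if v = 0 then [] else if v = 4 then [l1 + l2 + 1 - j] else [j - l1])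
  else if j \<le> n - l2 then [n + 1 - j]
  else if j \<le> n - h2 then (if v = 0 then [n + 1 - j] else if v = 1 then [j + l2 + h2 - n, 2*n - l2 - h2 + 1 - j]
      else if v = 2 then [2*n - l2 - h2 + 1 - j] else if v = 3 then [n + 1 - j, 2*n - l2 + 1 - j]
      else [2*n - l2 + 1 - j])
  else (if v = 0 then [n + 1 - j, j] else if v = 1 then [j] else if v = 2 then [j] else [j - l1]))"

definition period_picks :: "int \<Rightarrow> int \<Rightarrow> int" where
"period_picks n j = (if j \<le> quarter n then 3 else if j \<le> two_fifths n then 4
   else if j \<le> n - two_fifths n then 5 else if j \<le> n - (two_fifths n - quarter n) then 7 else 6)"

definition slots_before :: "int \<Rightarrow> int \<Rightarrow> nat \<Rightarrow> nat" where
  "slots_before n j v = (\<Sum>w<v. length (block_slots n j w))"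

lemma less_5_cases: "v < 5 \<Longrightarrow> v = 0 \<or> v = 1 \<or> v = 2 \<or> v = 3 \<or> v = 4" for v :: nat
  by linarith

lemma block_owner_bounds:
  assumes "1 \<le> q" "q \<le> n"
  shows "1 \<le> block_owner n v q \<and> block_owner n v q \<le> n"
  using assms quarter_two_fifths_bounds[of n] unfolding block_owner_def Let_def
  by (simp split: if_splits; linarith)

lemma mem_block_slots_block_owner:
  assumes "1 \<le> q" "q \<le> n" "v < 5"
  shows "q \<in> set (block_slots n (block_owner n v q) v)"
  using less_5_cases[OF assms(3)] assms quarter_two_fifths_bounds[of n]
  unfolding block_owner_def block_slots_def Let_def
  by (elim disjE; simp split: if_splits; linarith)

lemma slots_before_5: "int (slots_before n j 5) = period_picks n j"
  by (cases rule: agent_region_cases[of j n])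
     (simp_all add: slots_before_def period_picks_def block_slots_def Let_def numeral_eq_Suc lessThan_Suc)

lemma period_picks_bound:
  assumes "1 \<le> j" "j \<le> n"
  shows "period_picks n j * n + max 0 (5 * n - period_picks n j * j) \<le> 8 * n"
  using assms quarter_two_fifths_bounds[of n]
  by (cases rule: agent_region_cases[of j n]) (simp add: period_picks_def; linarith)+

(* The counting bound of held_positions_le_sum_position_weight, multiplied by 5 n, for the
   last  K = n + v n + q  positions, i.e. up to slot q of the block of pattern v. *)
lemma block_prefix_count:
  assumes "1 \<le> j" "j \<le> n" "0 \<le> q" "q \<le> n" "v < 5"
  shows "5 * n * int (1 + slots_before n j v + length (filter (\<lambda>p. p \<le> q) (block_slots n j v)))
     \<le> period_picks n j * (n * (1 + int v) + q) + (16 - 2 * period_picks n j) * n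
        - max 0 (5 * n - period_picks n j * j)"
  using less_5_cases[OF assms(5)] assms quarter_two_fifths_bounds[of n]
  by (cases rule: agent_region_cases[of j n])
     (elim disjE; simp add: slots_before_def period_picks_def block_slots_def Let_def numeral_eq_Suc lessThan_Suc;
      linarith)+

(* Positions x are counted from the end and agents are 0-based here (agent j0 is agent j0 + 1
   of the tables): the last n positions go to agents 0, ..., n - 1, and the following blocks of
   n positions use the patterns 0, 1, 2, 3, 4, 0, 1, ... *)
definition picking_owner :: "nat \<Rightarrow> nat \<Rightarrow> nat" where
  "picking_owner n x = (if x < n then x
     else nat (block_owner (int n) (((x - n) div n) mod 5) (int ((x - n) mod n) + 1)) - 1)"

lemma picking_owner_less:
  assumes "0 < n"
  shows "picking_owner n x < n"
proof (cases "x < n")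
  case False
  let ?b = "block_owner (int n) (((x - n) div n) mod 5) (int ((x - n) mod n) + 1)"
  have "(x - n) mod n < n" using assms by simp
  then have "1 \<le> ?b \<and> ?b \<le> int n" by (intro block_owner_bounds) auto
  then show ?thesis using False by (simp add: picking_owner_def) linarith
qed (simp add: picking_owner_def)

lemma picking_owner_in_block:
  assumes "q < n" "j0 < n"
  shows "picking_owner n (n + T * n + q) = j0 \<longleftrightarrow> block_owner (int n) (T mod 5) (int q + 1) = int j0 + 1"
proof -
  have "(T * n + q) div n = T" "(T * n + q) mod n = q" using assms(1) by auto
  moreover have "1 \<le> block_owner (int n) (T mod 5) (int q + 1)"
    using block_owner_bounds[of "int q + 1" "int n"] assms(1) by simp
  ultimately show ?thesis by (simp add: picking_owner_def) linarith
qed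

section \<open>Positions held by an agent\<close>

definition held_positions :: "nat \<Rightarrow> nat \<Rightarrow> nat \<Rightarrow> nat" where
  "held_positions n j0 K = card {x. x < K \<and> picking_owner n x = j0}"

lemma held_positions_le_add:
  assumes "A \<le> B"
  shows "held_positions n j0 B \<le> held_positions n j0 A + card {x. A \<le> x \<and> x < B \<and> picking_owner n x = j0}"
proof -
  have "{x. x < B \<and> picking_owner n x = j0}
      \<subseteq> {x. x < A \<and> picking_owner n x = j0} \<union> {x. A \<le> x \<and> x < B \<and> picking_owner n x = j0}"
    by auto
  then have "held_positions n j0 B
      \<le> card ({x. x < A \<and> picking_owner n x = j0} \<union> {x. A \<le> x \<and> x < B \<and> picking_owner n x = j0})"
    unfolding held_positions_def by (intro card_mono) auto
  also have "\<dots> \<le> held_positions n j0 A + card {x. A \<le> x \<and> x < B \<and> picking_owner n x = j0}"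
    unfolding held_positions_def by (rule card_Un_le)
  finally show ?thesis .
qed

lemma held_positions_initial: "K \<le> n \<Longrightarrow> held_positions n j0 K \<le> (if j0 < K then 1 else 0)"
proof -
  assume "K \<le> n"
  then have "{x. x < K \<and> picking_owner n x = j0} = (if j0 < K then {j0} else {})"
    by (auto simp: picking_owner_def)
  then show ?thesis by (simp add: held_positions_def)
qed

lemma card_held_in_block:
  assumes "q \<le> n" "j0 < n"
  shows "card {x. n + T * n \<le> x \<and> x < n + T * n + q \<and> picking_owner n x = j0}
     \<le> length (filter (\<lambda>p. p \<le> int q) (block_slots (int n) (int j0 + 1) (T mod 5)))"
proof -
  let ?S = "{q'. q' < q \<and> block_owner (int n) (T mod 5) (int q' + 1) = int j0 + 1}"
  let ?slots = "filter (\<lambda>p. p \<le> int q) (block_slots (int n) (int j0 + 1) (T mod 5))"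
  have "{x. n + T * n \<le> x \<and> x < n + T * n + q \<and> picking_owner n x = j0} = (\<lambda>q'. n + T * n + q') ` ?S"
  proof (intro set_eqI iffI)
    fix x assume x: "x \<in> {x. n + T * n \<le> x \<and> x < n + T * n + q \<and> picking_owner n x = j0}"
    then have "x = n + T * n + (x - (n + T * n))" "x - (n + T * n) \<in> ?S"
      using picking_owner_in_block[OF _ assms(2), of "x - (n + T * n)" T] assms(1) by auto
    then show "x \<in> (\<lambda>q'. n + T * n + q') ` ?S" by (rule image_eqI)
  next
    fix x assume "x \<in> (\<lambda>q'. n + T * n + q') ` ?S"
    then show "x \<in> {x. n + T * n \<le> x \<and> x < n + T * n + q \<and> picking_owner n x = j0}"
      using picking_owner_in_block[OF _ assms(2)] assms(1) by auto
  qed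
  also have "card \<dots> = card ((\<lambda>q'. int q' + 1) ` ?S)"
    by (simp add: card_image inj_on_def)
  also have "\<dots> \<le> card (set ?slots)"
  proof (intro card_mono subsetI)
    fix p assume "p \<in> (\<lambda>q'. int q' + 1) ` ?S"
    then obtain q' where "q' < q" "block_owner (int n) (T mod 5) (int q' + 1) = int j0 + 1" "p = int q' + 1"
      by auto
    then show "p \<in> set ?slots"
      using mem_block_slots_block_owner[of "int q' + 1" "int n" "T mod 5"] assms(1) by auto
  qed simp
  also have "\<dots> \<le> length ?slots" by (rule card_length)
  finally show ?thesis .
qed

definition slots_upto :: "int \<Rightarrow> int \<Rightarrow> nat \<Rightarrow> int" where
  "slots_upto n j T = period_picks n j * int (T div 5) + int (slots_before n j (T mod 5))"

lemma slots_upto_Suc: "slots_upto n j (Suc T) = slots_upto n j T + int (length (block_slots n j (T mod 5)))"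
proof (cases "T mod 5 = 4")
  case True
  then have "Suc T div 5 = T div 5 + 1" "Suc T mod 5 = 0" by presburger+
  moreover have "period_picks n j = int (slots_before n j 4) + int (length (block_slots n j 4))"
    using slots_before_5[of n j] by (simp add: slots_before_def numeral_eq_Suc)
  ultimately show ?thesis using True by (simp add: slots_upto_def slots_before_def algebra_simps)
next
  case False
  then have "Suc T div 5 = T div 5" "Suc T mod 5 = Suc (T mod 5)" by presburger+
  then show ?thesis by (simp add: slots_upto_def slots_before_def)
qed

lemma held_positions_le_slots_upto:
  assumes "q \<le> n" "j0 < n"
  shows "int (held_positions n j0 (n + T * n + q)) \<le> 1 + slots_upto (int n) (int j0 + 1) T
     + int (length (filter (\<lambda>p. p \<le> int q) (block_slots (int n) (int j0 + 1) (T mod 5))))"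
  using assms(1)
proof (induction T arbitrary: q)
  case 0
  have "held_positions n j0 (n + q)
      \<le> held_positions n j0 n + card {x. n \<le> x \<and> x < n + q \<and> picking_owner n x = j0}"
    by (rule held_positions_le_add) simp
  moreover have "held_positions n j0 n \<le> 1"
    using held_positions_initial[of n n j0] by (simp split: if_splits)
  moreover have "card {x. n \<le> x \<and> x < n + q \<and> picking_owner n x = j0}
     \<le> length (filter (\<lambda>p. p \<le> int q) (block_slots (int n) (int j0 + 1) 0))"
    using card_held_in_block[OF "0.prems" assms(2), of 0] by simp
  ultimately show ?case by (simp add: slots_upto_def slots_before_def)
next
  case (Suc T)
  let ?B = "n + Suc T * n"
  let ?slots = "\<lambda>T. block_slots (int n) (int j0 + 1) (T mod 5)"
  have "held_positions n j0 (?B + q)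
      \<le> held_positions n j0 ?B + card {x. ?B \<le> x \<and> x < ?B + q \<and> picking_owner n x = j0}"
    by (rule held_positions_le_add) simp
  moreover have "int (held_positions n j0 ?B) \<le> 1 + slots_upto (int n) (int j0 + 1) T + int (length (?slots T))"
  proof -
    have "n + T * n + n = ?B" by simp
    moreover have "int (held_positions n j0 (n + T * n + n)) \<le> 1 + slots_upto (int n) (int j0 + 1) T
        + int (length (filter (\<lambda>p. p \<le> int n) (?slots T)))"
      by (rule Suc.IH) simp
    moreover have "int (length (filter (\<lambda>p. p \<le> int n) (?slots T))) \<le> int (length (?slots T))"
      by (simp only: of_nat_le_iff length_filter_le)
    ultimately show ?thesis by (simp only:)
  qed
  moreover have "card {x. ?B \<le> x \<and> x < ?B + q \<and> picking_owner n x = j0}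
      \<le> length (filter (\<lambda>p. p \<le> int q) (?slots (Suc T)))"
    using card_held_in_block[OF Suc.prems assms(2), of "Suc T"] by simp
  ultimately show ?case by (simp add: slots_upto_Suc)
qed

lemma held_positions_tail_bound:
  fixes n j0 K :: nat
  defines "a \<equiv> period_picks (int n) (int j0 + 1)"
  assumes "j0 < n" "n < K"
  shows "5 * int n * int (held_positions n j0 K)
    \<le> a * int K + (16 - 2 * a) * int n - max 0 (5 * int n - a * (int j0 + 1))"
proof -
  define T where "T = (K - n - 1) div n"
  define q where "q = (K - n - 1) mod n + 1"
  have "0 < n" using assms(2) by simp
  have "K - n - 1 = T * n + (K - n - 1) mod n" unfolding T_def by simp
  moreover have "(K - n - 1) mod n < n" using \<open>0 < n\<close> by simp
  ultimately have K: "K = n + T * n + q" "1 \<le> q" "q \<le> n"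
    using assms(3) unfolding q_def by linarith+
  let ?u = "T div 5" and ?v = "T mod 5"
  let ?f = "length (filter (\<lambda>p. p \<le> int q) (block_slots (int n) (int j0 + 1) ?v))"
  have "5 * int n * int (held_positions n j0 K)
      \<le> 5 * int n * (1 + (a * int ?u + int (slots_before (int n) (int j0 + 1) ?v)) + int ?f)"
    using held_positions_le_slots_upto[OF K(3) assms(2), of T]
    unfolding K(1) slots_upto_def a_def by (intro mult_left_mono) auto
  also have "\<dots> = 5 * int n * int (1 + slots_before (int n) (int j0 + 1) ?v + ?f) + 5 * int n * a * int ?u"
    by (simp add: algebra_simps)
  also have "\<dots> \<le> a * (int n * (1 + int ?v) + int q) + (16 - 2 * a) * int n
      - max 0 (5 * int n - a * (int j0 + 1)) + 5 * int n * a * int ?u"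
    using block_prefix_count[of "int j0 + 1" "int n" "int q" ?v] assms(2) K unfolding a_def by simp
  also have "\<dots> = a * int K + (16 - 2 * a) * int n - max 0 (5 * int n - a * (int j0 + 1))"
  proof -
    have "int T = 5 * int ?u + int ?v" by presburger
    then show ?thesis unfolding K(1) by (simp add: algebra_simps)
  qed
  finally show ?thesis .
qed

(* The coefficients alpha, beta, gamma of the counting bound: alpha is the agent's share of
   each block in the long run, and beta is just large enough for the bound to reach 1 at the
   agent's position j0 among the last n. *)
definition share_coeff :: "nat \<Rightarrow> nat \<Rightarrow> real" where
  "share_coeff n j0 = real_of_int (period_picks (int n) (int j0 + 1)) / 5"

definition top_coeff :: "nat \<Rightarrow> nat \<Rightarrow> real" where
  "top_coeff n j0 = max 0 (1 - share_coeff n j0 * (real j0 + 1) / real n)"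

definition pair_coeff :: "nat \<Rightarrow> nat \<Rightarrow> real" where
  "pair_coeff n j0 = 8/5 - share_coeff n j0 - top_coeff n j0"

lemma top_coeff_eq:
  "0 < n \<Longrightarrow> top_coeff n j0
     = real_of_int (max 0 (5 * int n - period_picks (int n) (int j0 + 1) * (int j0 + 1))) / (5 * n)"
  by (simp add: top_coeff_def share_coeff_def of_int_max max_divide_distrib_right field_simps)

lemma coeffs_nonneg:
  assumes "0 < n" "j0 < n"
  shows "0 \<le> share_coeff n j0" "0 \<le> top_coeff n j0" "0 \<le> pair_coeff n j0"
proof -
  let ?a = "period_picks (int n) (int j0 + 1)"
  let ?M = "max 0 (5 * int n - ?a * (int j0 + 1))"
  show "0 \<le> share_coeff n j0" by (simp add: share_coeff_def period_picks_def)
  show "0 \<le> top_coeff n j0" by (simp add: top_coeff_def)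
  have "real_of_int (?a * int n + ?M) \<le> real_of_int (8 * int n)"
    using period_picks_bound[of "int j0 + 1" "int n"] assms(2) by (simp only: of_int_le_iff)
  then have bound: "real_of_int ?a * n + real_of_int ?M \<le> 8 * n" by simp
  have "share_coeff n j0 + top_coeff n j0 = (real_of_int ?a * n + real_of_int ?M) / (5 * n)"
    using assms(1) by (simp add: top_coeff_eq share_coeff_def field_simps)
  also have "\<dots> \<le> 8 * n / (5 * n)" using bound by (intro divide_right_mono) simp_all
  finally show "0 \<le> pair_coeff n j0" using assms(1) by (simp add: pair_coeff_def)
qed

definition position_weight :: "nat \<Rightarrow> nat \<Rightarrow> nat \<Rightarrow> real" where
  "position_weight n j0 x = share_coeff n j0 / n + (if x = 0 then top_coeff n j0 else 0)
     + (if x = n - 1 then pair_coeff n j0 else 0) + (if x = n then pair_coeff n j0 else 0)"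

lemma sum_position_weight:
  assumes "0 < n"
  shows "(\<Sum>x<K. position_weight n j0 x) = share_coeff n j0 * K / n + (if 1 \<le> K then top_coeff n j0 else 0)
     + (if n \<le> K then pair_coeff n j0 else 0) + (if n + 1 \<le> K then pair_coeff n j0 else 0)"
proof -
  have "n - 1 < K \<longleftrightarrow> n \<le> K" using assms by arith
  then show ?thesis by (auto simp: position_weight_def sum.distrib sum.delta' Suc_le_eq)
qed

lemma position_weight_nonneg: "0 < n \<Longrightarrow> j0 < n \<Longrightarrow> 0 \<le> position_weight n j0 x"
  using coeffs_nonneg[of n j0] by (simp add: position_weight_def)

lemma held_positions_le_sum_position_weight:
  assumes "0 < n" "j0 < n"
  shows "real (held_positions n j0 K) \<le> (\<Sum>x<K. position_weight n j0 x)"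
proof (cases "K \<le> n")
  case True
  note coeffs = coeffs_nonneg[OF assms]
  show ?thesis
  proof (cases "j0 < K")
    case False
    then show ?thesis using True held_positions_initial[of K n j0] position_weight_nonneg[OF assms]
      by (simp add: sum_nonneg)
  next
    case j0K: True
    have "share_coeff n j0 * (real j0 + 1) / n \<le> share_coeff n j0 * K / n"
      using j0K coeffs by (intro divide_right_mono mult_left_mono) auto
    then have "1 \<le> share_coeff n j0 * K / n + top_coeff n j0" unfolding top_coeff_def by linarith
    then show ?thesis using True j0K held_positions_initial[of K n j0] coeffs assms(1)
      by (auto simp: sum_position_weight)
  qed
next
  case False
  let ?a = "period_picks (int n) (int j0 + 1)"
  have "5 * int n * int (held_positions n j0 K)
      \<le> ?a * int K + (16 - 2 * ?a) * int n - max 0 (5 * int n - ?a * (int j0 + 1))"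
    using held_positions_tail_bound[OF assms(2), of K] False by simp
  then have "real_of_int (5 * int n * int (held_positions n j0 K))
      \<le> real_of_int (?a * int K + (16 - 2 * ?a) * int n - max 0 (5 * int n - ?a * (int j0 + 1)))"
    by (simp only: of_int_le_iff)
  then have "5 * real n * real (held_positions n j0 K)
      \<le> real_of_int (?a * int K + (16 - 2 * ?a) * int n - max 0 (5 * int n - ?a * (int j0 + 1)))"
    by simp
  also have "\<dots> = 5 * real n * (share_coeff n j0 * K / n + top_coeff n j0 + 2 * pair_coeff n j0)"
    using assms(1) by (simp add: top_coeff_eq pair_coeff_def share_coeff_def field_simps)
  finally show ?thesis using False assms(1) by (simp add: sum_position_weight)
qed

lemma sum_position_weight_dsorted_le_CS:
  assumes "0 < n" "j0 < n" "\<forall>j<m. 0 \<le> ci j"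
  shows "(\<Sum>x<m. position_weight n j0 x * dsorted ci m x) \<le> 8/5 * CS ci n m"
proof -
  let ?d = "dsorted ci m"
  note coeffs = coeffs_nonneg[OF assms(1,2)]
  note d_nonneg = dsorted_nonneg[OF assms(3)]
  have "(\<Sum>x<m. position_weight n j0 x * ?d x)
      = share_coeff n j0 / n * (\<Sum>x<m. ?d x) + (\<Sum>x<m. if x = 0 then top_coeff n j0 * ?d x else 0)
        + (\<Sum>x<m. if x = n - 1 then pair_coeff n j0 * ?d x else 0)
        + (\<Sum>x<m. if x = n then pair_coeff n j0 * ?d x else 0)"
  proof -
    have e: "position_weight n j0 x * ?d x = share_coeff n j0 / n * ?d x + (if x = 0 then top_coeff n j0 * ?d x else 0)
        + (if x = n - 1 then pair_coeff n j0 * ?d x else 0) + (if x = n then pair_coeff n j0 * ?d x else 0)" for x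
      by (simp add: position_weight_def algebra_simps)
    show ?thesis unfolding e sum.distrib sum_distrib_left ..
  qed
  also have "\<dots> \<le> share_coeff n j0 / n * (\<Sum>x<m. ?d x) + top_coeff n j0 * ?d 0
      + pair_coeff n j0 * ?d (n - 1) + pair_coeff n j0 * ?d n"
  proof -
    have "(\<Sum>x<m. if x = a then c * ?d x else 0) \<le> c * ?d a" if "0 \<le> c" for a c
      using that d_nonneg by (intro sum_if_eq_le) simp_all
    from this[of "top_coeff n j0" 0] this[of "pair_coeff n j0" "n - 1"] this[of "pair_coeff n j0" n]
    show ?thesis using coeffs by linarith
  qed
  also have "\<dots> \<le> share_coeff n j0 * CS ci n m + top_coeff n j0 * CS ci n m + pair_coeff n j0 * CS ci n m"
  proof -
    have "share_coeff n j0 / n * (\<Sum>x<m. ?d x) = share_coeff n j0 * ((\<Sum>j<m. ci j) / n)"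
      by (simp add: sum_dsorted)
    also have "\<dots> \<le> share_coeff n j0 * CS ci n m" using coeffs by (intro mult_left_mono) (simp_all add: CS_def)
    finally have share: "share_coeff n j0 / n * (\<Sum>x<m. ?d x) \<le> share_coeff n j0 * CS ci n m" .
    have top: "top_coeff n j0 * ?d 0 \<le> top_coeff n j0 * CS ci n m"
      using coeffs by (intro mult_left_mono) (simp_all add: CS_def)
    have "pair_coeff n j0 * (?d (n - 1) + ?d n) \<le> pair_coeff n j0 * CS ci n m"
      using coeffs by (intro mult_left_mono) (simp_all add: CS_def)
    with share top show ?thesis by (simp add: distrib_left)
  qed
  also have "\<dots> = 8/5 * CS ci n m" by (simp add: pair_coeff_def algebra_simps)
  finally show ?thesis .
qed

lemma sum_held_dsorted_le_CS:
  assumes "0 < n" "j0 < n" "\<forall>j<m. 0 \<le> ci j"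
  shows "(\<Sum>x<m. if picking_owner n x = j0 then dsorted ci m x else 0) \<le> 8/5 * CS ci n m"
proof -
  have "(\<Sum>x<m. if picking_owner n x = j0 then dsorted ci m x else 0)
      \<le> (\<Sum>x<m. position_weight n j0 x * dsorted ci m x)"
    using dsorted_Suc_le[OF assms(3)] dsorted_nonneg[OF assms(3)]
      held_positions_le_sum_position_weight[OF assms(1,2)]
    by (intro sum_antimono_le_weighted_sum) (simp_all add: held_positions_def)
  also have "\<dots> \<le> 8/5 * CS ci n m" by (rule sum_position_weight_dsorted_le_CS[OF assms])
  finally show ?thesis .
qed

lemma greedy_disvalue_le_CS:
  assumes "0 < n" "k < n" "i < n" "\<forall>j<m. 0 \<le> ci j" "greedy ci m s"
  shows "disvalue ci m (rotated_sequence n m (picking_owner n) k) (Q(i := s)) i \<le> 8/5 * CS ci n m"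
proof -
  have "disvalue ci m (rotated_sequence n m (picking_owner n) k) (Q(i := s)) i
      \<le> (\<Sum>x<m. if (picking_owner n x + k) mod n = i then dsorted ci m x else 0)"
    by (rule greedy_disvalue_rotated_sequence_le[OF assms(5)])
  also have "\<dots> = (\<Sum>x<m. if picking_owner n x = (i + (n - k)) mod n then dsorted ci m x else 0)"
    using add_mod_eq_iff[OF picking_owner_less[OF assms(1)] assms(2,3)] by simp
  also have "\<dots> \<le> 8/5 * CS ci n m"
    using assms(1,4) by (intro sum_held_dsorted_le_CS) simp_all
  finally show ?thesis .
qed

theorem corollary2:
  fixes n m :: nat
  assumes "n \<ge> 1"
  shows "\<exists>D. valid_mechanism n m D \<and>
    (\<forall>c :: nat \<Rightarrow> nat \<Rightarrow> real. (\<forall>i<n. \<forall>j<m. c i j \<ge> 0) \<longrightarrow>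
       EF_RA n m D c \<and>
       (\<forall>i<n. \<forall>s Q. greedy (c i) m s \<longrightarrow>
          measure_pmf.expectation D (\<lambda>tau. disvalue (c i) m tau (Q(i := s)) i)
            \<le> (\<Sum>j<m. c i j) / real n) \<and>
       (\<forall>i<n. \<forall>s Q. greedy (c i) m s \<longrightarrow>
          (\<forall>tau\<in>set_pmf D. disvalue (c i) m tau (Q(i := s)) i \<le> 8/5 * CS (c i) n m)))"
proof -
  have n: "0 < n" using assms by simp
  let ?D = "rotation_mechanism n m (picking_owner n)"
  show ?thesis
  proof (intro exI[of _ ?D] conjI allI impI)
    show "valid_mechanism n m ?D" by (rule valid_rotation_mechanism[OF n])
  next
    fix c show "EF_RA n m ?D c" by (rule EF_RA_rotation_mechanism[OF n])
  next
    fix c i s Q assume "i < n" "greedy (c i) m s"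
    moreover have "\<And>x. picking_owner n x < n" by (rule picking_owner_less[OF n])
    ultimately show "measure_pmf.expectation ?D (\<lambda>tau. disvalue (c i) m tau (Q(i := s)) i)
        \<le> (\<Sum>j<m. c i j) / real n"
      by (intro expected_greedy_disvalue_le_share[OF n])
  next
    fix c i s Q assume "\<forall>i<n. \<forall>j<m. 0 \<le> c i j" "i < n" "greedy (c i) m s"
    then show "\<forall>tau\<in>set_pmf ?D. disvalue (c i) m tau (Q(i := s)) i \<le> 8/5 * CS (c i) n m"
      using greedy_disvalue_le_CS[OF n] by (auto simp: set_pmf_rotation_mechanism[OF n])
  qed
qed

end
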